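(* Let $(C_X,C_Z)$ be a GF(4) CSS code of length $n$ and distance $d$. Then $S'_X\perp S'_Z$, so $(S'_X,S'_Z)$ defines a CSS qubit code on $4n$ qubits, and its distance is at least $2d$.
   Context: $\mathrm{GF}(4)=\{0,1,\omega,\omega^2\}$ with $\omega^2=\omega+1$. A GF(4) CSS code of length $n$ is a pair of $\mathrm{GF}(4)$-linear subspaces $C_X,C_Z\subseteq\mathrm{GF}(4)^n$ with $\sum_ju_jv_j=0$ for all $u\in C_X$, $v\in C_Z$; with $C^\perp$ the Euclidean dual over GF(4) and $\mathrm{wt}$ the number of nonzero coordinates, $d_X=\min\{\mathrm{wt}(u):u\in C_Z^\perp\setminus C_X\}$, $d_Z=\min\{\mathrm{wt}(u):u\in C_X^\perp\setminus C_Z\}$, $d=\min(d_X,d_Z)$. Define $\mathbb F_2$-linear maps $\phi_X,\phi_Z:\mathrm{GF}(4)\to\mathbb F_2^4$ by $\phi_X(0)=0000$, $\phi_X(\omega)=1100$, $\phi_X(\omega^2)=1010$, $\phi_X(1)=0110$ and $\phi_Z(0)=0000$, $\phi_Z(\omega^2)=0011$, $\phi_Z(\omega)=0101$, $\phi_Z(1)=0110$ (binarization in the basis $\{\omega,\omega^2\}$ followed by encoding each qubit pair in the $[[4,2,2]]$ code). For $u\in\mathrm{GF}(4)^n$ let $\Phi_X(u)=(\phi_X(u_1),\dots,\phi_X(u_n))\in\mathbb F_2^{4n}$, similarly $\Phi_Z$. Let $B_j\in\mathbb F_2^{4n}$ be the all-ones indicator of the $j$-th block of 4 coordinates. Set $S'_X=\Phi_X(C_X)+\mathrm{span}\{B_1,\dots,B_n\}$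 and $S'_Z=\Phi_Z(C_Z)+\mathrm{span}\{B_1,\dots,B_n\}$ as the $X$- and $Z$-stabilizer spaces. The qubit code distance is $\min(d'_X,d'_Z)$ with $d'_X=\min\{|v|:v\in S_Z'^{\perp}\setminus S'_X\}$ and $d'_Z=\min\{|v|:v\in S_X'^{\perp}\setminus S'_Z\}$. *)

theory Defs
  imports Main "HOL-Library.Z2" "HOL-Library.Extended_Nat"
begin

datatype gf4 = G0 | G1 | GW | GW2   (* GW = omega, GW2 = omega^2 *)

fun gf4_add :: "gf4 \<Rightarrow> gf4 \<Rightarrow> gf4" where
  "gf4_add G0 y = y"
| "gf4_add x G0 = x"
| "gf4_add G1 G1 = G0"
| "gf4_add G1 GW = GW2"
| "gf4_add G1 GW2 = GW"
| "gf4_add GW G1 = GW2"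
| "gf4_add GW GW = G0"
| "gf4_add GW GW2 = G1"
| "gf4_add GW2 G1 = GW"
| "gf4_add GW2 GW = G1"
| "gf4_add GW2 GW2 = G0"

fun gf4_mul :: "gf4 \<Rightarrow> gf4 \<Rightarrow> gf4" where
  "gf4_mul G0 y = G0"
| "gf4_mul x G0 = G0"
| "gf4_mul G1 y = y"
| "gf4_mul x G1 = x"
| "gf4_mul GW GW = GW2"
| "gf4_mul GW GW2 = G1"
| "gf4_mul GW2 GW = G1"
| "gf4_mul GW2 GW2 = GW"

fun gf4_inv :: "gf4 \<Rightarrow> gf4" where
  "gf4_inv G0 = G0"
| "gf4_inv G1 = G1"
| "gf4_inv GW = GW2"
| "gf4_inv GW2 = GW"

instantiation gf4 :: field
begin
definition zero_gf4 :: gf4 where "zero_gf4 = G0"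
definition one_gf4 :: gf4 where "one_gf4 = G1"
definition plus_gf4 :: "gf4 \<Rightarrow> gf4 \<Rightarrow> gf4" where "plus_gf4 x y = gf4_add x y"
definition minus_gf4 :: "gf4 \<Rightarrow> gf4 \<Rightarrow> gf4" where "minus_gf4 x y = gf4_add x y"
definition uminus_gf4 :: "gf4 \<Rightarrow> gf4" where "uminus_gf4 x = x"
definition times_gf4 :: "gf4 \<Rightarrow> gf4 \<Rightarrow> gf4" where "times_gf4 x y = gf4_mul x y"
definition inverse_gf4 :: "gf4 \<Rightarrow> gf4" where "inverse_gf4 x = gf4_inv x"
definition divide_gf4 :: "gf4 \<Rightarrow> gf4 \<Rightarrow> gf4" where "divide_gf4 x y = gf4_mul x (gf4_inv y)"
instance
proof
  fix a b c :: gf4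
  show "a * b * c = a * (b * c)"
    by (cases a; cases b; cases c) (simp_all add: times_gf4_def)
  show "a * b = b * a"
    by (cases a; cases b) (simp_all add: times_gf4_def)
  show "1 * a = a"
    by (cases a) (simp_all add: times_gf4_def one_gf4_def)
  show "a + b + c = a + (b + c)"
    by (cases a; cases b; cases c) (simp_all add: plus_gf4_def)
  show "a + b = b + a"
    by (cases a; cases b) (simp_all add: plus_gf4_def)
  show "0 + a = a"
    by (cases a) (simp_all add: plus_gf4_def zero_gf4_def)
  show "- a + a = 0"
    by (cases a) (simp_all add: plus_gf4_def zero_gf4_def uminus_gf4_def)
  show "a - b = a + - b"
    by (simp add: plus_gf4_def minus_gf4_def uminus_gf4_def)
  show "(a + b) * c = a * c + b * c"
    by (cases a; cases b; cases c) (simp_all add: plus_gf4_def times_gf4_def)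
  show "(0::gf4) \<noteq> 1"
    by (simp add: zero_gf4_def one_gf4_def)
  show "a \<noteq> 0 \<Longrightarrow> inverse a * a = 1"
    by (cases a) (simp_all add: inverse_gf4_def times_gf4_def zero_gf4_def one_gf4_def)
  show "divide a b = a * inverse b"
    by (simp add: divide_gf4_def times_gf4_def inverse_gf4_def)
  show "inverse (0::gf4) = 0"
    by (simp add: inverse_gf4_def zero_gf4_def)
qed
end

lemma gf4_omega_sq: "GW * GW = GW + 1"
  by (simp add: times_gf4_def plus_gf4_def one_gf4_def)

definition vecs :: "nat \<Rightarrow> (nat \<Rightarrow> 'a::zero) set" where
  "vecs m = {v. \<forall>i\<ge>m. v i = 0}"

definition wt :: "nat \<Rightarrow> (nat \<Rightarrow> 'a::zero) \<Rightarrow> nat" where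
  "wt m v = card {i. i < m \<and> v i \<noteq> 0}"

definition dotp :: "nat \<Rightarrow> (nat \<Rightarrow> 'a::comm_ring_1) \<Rightarrow> (nat \<Rightarrow> 'a) \<Rightarrow> 'a" where
  "dotp m u v = (\<Sum>i<m. u i * v i)"

definition dual :: "nat \<Rightarrow> (nat \<Rightarrow> 'a::comm_ring_1) set \<Rightarrow> (nat \<Rightarrow> 'a) set" where
  "dual m C = {v \<in> vecs m. \<forall>u\<in>C. dotp m u v = 0}"

definition lin_subspace :: "nat \<Rightarrow> (nat \<Rightarrow> 'a::field) set \<Rightarrow> bool" where
  "lin_subspace m C \<longleftrightarrow> C \<subseteq> vecs m \<and> (\<lambda>_. 0) \<in> C \<and>
     (\<forall>u\<in>C. \<forall>v\<in>C. (\<lambda>i. u i + v i) \<in> C) \<and>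
     (\<forall>c. \<forall>u\<in>C. (\<lambda>i. c * u i) \<in> C)"

definition css_code :: "nat \<Rightarrow> (nat \<Rightarrow> 'a::field) set \<Rightarrow> (nat \<Rightarrow> 'a) set \<Rightarrow> bool" where
  "css_code m CX CZ \<longleftrightarrow> lin_subspace m CX \<and> lin_subspace m CZ \<and>
     (\<forall>u\<in>CX. \<forall>v\<in>CZ. dotp m u v = 0)"

text \<open>Distances (minimum over an empty set is infinity).\<close>
definition dist_X :: "nat \<Rightarrow> (nat \<Rightarrow> 'a::comm_ring_1) set \<Rightarrow> (nat \<Rightarrow> 'a) set \<Rightarrow> enat" where
  "dist_X m CX CZ = Inf ((\<lambda>u. enat (wt m u)) ` (dual m CZ - CX))"

definition dist_Z :: "nat \<Rightarrow> (nat \<Rightarrow> 'a::comm_ring_1) set \<Rightarrow> (nat \<Rightarrow> 'a) set \<Rightarrow> enat" where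
  "dist_Z m CX CZ = Inf ((\<lambda>u. enat (wt m u)) ` (dual m CX - CZ))"

definition css_dist :: "nat \<Rightarrow> (nat \<Rightarrow> 'a::comm_ring_1) set \<Rightarrow> (nat \<Rightarrow> 'a) set \<Rightarrow> enat" where
  "css_dist m CX CZ = min (dist_X m CX CZ) (dist_Z m CX CZ)"

fun phiX :: "gf4 \<Rightarrow> bit list" where
  "phiX G0 = [0,0,0,0]"
| "phiX GW = [1,1,0,0]"
| "phiX GW2 = [1,0,1,0]"
| "phiX G1 = [0,1,1,0]"

fun phiZ :: "gf4 \<Rightarrow> bit list" where
  "phiZ G0 = [0,0,0,0]"
| "phiZ GW2 = [0,0,1,1]"
| "phiZ GW = [0,1,0,1]"
| "phiZ G1 = [0,1,1,0]"

definition PhiX :: "nat \<Rightarrow> (nat \<Rightarrow> gf4) \<Rightarrow> (nat \<Rightarrow> bit)" where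
  "PhiX n u = (\<lambda>i. if i < 4 * n then phiX (u (i div 4)) ! (i mod 4) else 0)"

definition PhiZ :: "nat \<Rightarrow> (nat \<Rightarrow> gf4) \<Rightarrow> (nat \<Rightarrow> bit)" where
  "PhiZ n u = (\<lambda>i. if i < 4 * n then phiZ (u (i div 4)) ! (i mod 4) else 0)"

definition blockB :: "nat \<Rightarrow> (nat \<Rightarrow> bit)" where
  "blockB j = (\<lambda>i. if i div 4 = j then 1 else 0)"

text \<open>span{B_1..B_n} over F_2 = sums over subsets J of the blocks.\<close>
definition SX' :: "nat \<Rightarrow> (nat \<Rightarrow> gf4) set \<Rightarrow> (nat \<Rightarrow> bit) set" where
  "SX' n CX = {(\<lambda>i. PhiX n c i + (\<Sum>j\<in>J. blockB j i)) | c J. c \<in> CX \<and> J \<subseteq> {..<n}}"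

definition SZ' :: "nat \<Rightarrow> (nat \<Rightarrow> gf4) set \<Rightarrow> (nat \<Rightarrow> bit) set" where
  "SZ' n CZ = {(\<lambda>i. PhiZ n c i + (\<Sum>j\<in>J. blockB j i)) | c J. c \<in> CZ \<and> J \<subseteq> {..<n}}"

end

theory Submission
  imports Defs
begin

(* Blockwise, phiX and phiZ identify GF(4) with the even-weight words of F_2^4 modulo the
   all-ones word 1111, and the F_2 inner product of phiX x + e 1111 with phiZ y + e' 1111 is
   the trace tr (x y); so C_X \<bottom> C_Z gives S'_X \<bottom> S'_Z.
   Conversely, a vector v \<in> S'_Z^\<bottom> \ S'_X is orthogonal to every B_j, hence each of its
   blocks has even weight and decodes to some u_j \<in> GF(4) with v = Phi_X u + \<Sum>_{j\<in>J} B_j.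
   Orthogonality of v to Phi_Z(C_Z) says tr <c, u> = 0 for all c \<in> C_Z; as C_Z is closed
   under multiplication by \<omega> and the trace form is nondegenerate, u \<in> C_Z^\<bottom>, and
   u \<notin> C_X because v \<notin> S'_X. A block with u_j \<noteq> 0 is an even-weight word other than
   0000 and 1111, so wt v \<ge> 2 wt u. The Z side is symmetric. *)

(* The absolute trace x + x^2 of GF(4) over F_2. *)
fun gf4_trace :: "gf4 \<Rightarrow> bit" where
  "gf4_trace G0 = 0" | "gf4_trace G1 = 0" | "gf4_trace GW = 1" | "gf4_trace GW2 = 1"

lemma gf4_trace_add: "gf4_trace (x + y) = gf4_trace x + gf4_trace y"
  by (cases x; cases y) (simp_all add: plus_gf4_def)

lemma gf4_trace_sum: "gf4_trace (sum f A) = (\<Sum>a\<in>A. gf4_trace (f a))"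
  using sum_comp_morphism[of gf4_trace f A] by (simp add: gf4_trace_add zero_gf4_def o_def)

lemma gf4_trace_nondegenerate: "gf4_trace x = 0 \<Longrightarrow> gf4_trace (GW * x) = 0 \<Longrightarrow> x = 0"
  by (cases x) (simp_all add: times_gf4_def zero_gf4_def)

lemma dotp_eq_0_if_gf4_trace_dotp_eq_0:
  assumes "lin_subspace n C" and "\<And>c. c \<in> C \<Longrightarrow> gf4_trace (dotp n c u) = 0" and "c \<in> C"
  shows "dotp n c u = 0"
proof (rule gf4_trace_nondegenerate)
  show "gf4_trace (dotp n c u) = 0"
    using assms(2,3) .
  have "(\<lambda>i. GW * c i) \<in> C"
    using assms(1,3) unfolding lin_subspace_def by blast
  moreover have "dotp n (\<lambda>i. GW * c i) u = GW * dotp n c u"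
    by (simp add: dotp_def sum_distrib_left mult.assoc)
  ultimately show "gf4_trace (GW * dotp n c u) = 0"
    using assms(2) by metis
qed

lemma sum_lessThan_4: "(\<Sum>k<4. f k) = f 0 + f 1 + f 2 + f (3::nat)"
  by (simp add: eval_nat_numeral add.assoc)

lemma less_4_cases: "(k::nat) < 4 \<Longrightarrow> k = 0 \<or> k = 1 \<or> k = 2 \<or> k = 3"
  by auto

lemma wt_eq_sum: "wt m v = (\<Sum>i<m. if v i = 0 then 0 else 1)"
  unfolding wt_def by (simp add: sum.If_cases lessThan_def Collect_conj_eq flip: Collect_neg_eq)

definition phi :: "bool \<Rightarrow> gf4 \<Rightarrow> bit list" where
  "phi s = (if s then phiX else phiZ)"

(* The element b \<omega> + c \<omega>^2. *)
definition gf4_of_coords :: "bit \<Rightarrow> bit \<Rightarrow> gf4" where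
  "gf4_of_coords b c = (if b = 0 then (if c = 0 then G0 else GW2) else (if c = 0 then GW else G1))"

(* phiX vanishes at position 3 and phiZ at position 0, so the multiple of 1111 in an
   even-weight block is read off there; after removing it, positions 1 and 2 of both
   encodings hold the coordinates in the basis {\<omega>, \<omega>^2}. *)
definition block_flip :: "bool \<Rightarrow> (nat \<Rightarrow> bit) \<Rightarrow> bit" where
  "block_flip s w = (if s then w 3 else w 0)"

definition block_decode :: "bool \<Rightarrow> (nat \<Rightarrow> bit) \<Rightarrow> gf4" where
  "block_decode s w = gf4_of_coords (w 1 + block_flip s w) (w 2 + block_flip s w)"

lemma dotp_phi_plus_ones:
  "(\<Sum>k<4. (phi True x ! k + e) * (phi False y ! k + e')) = gf4_trace (x * y)"
  by (cases x; cases y; cases e; cases e') (simp_all add: sum_lessThan_4 phi_def times_gf4_def)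

lemma phi_block_decode:
  assumes "(\<Sum>k<4. w k) = 0" and "k < 4"
  shows "phi s (block_decode s w) ! k + block_flip s w = w k"
  using assms less_4_cases[OF assms(2)]
  by (cases s; cases "w 0"; cases "w 1"; cases "w 2"; cases "w 3")
     (auto simp: sum_lessThan_4 phi_def block_decode_def block_flip_def gf4_of_coords_def)

lemma phi_dot_block_decode:
  assumes "(\<Sum>k<4. w k) = 0"
  shows "(\<Sum>k<4. phi (\<not> s) y ! k * w k) = gf4_trace (y * block_decode s w)"
  using assms
  by (cases s; cases y; cases "w 0"; cases "w 1"; cases "w 2"; cases "w 3")
     (simp_all add: sum_lessThan_4 phi_def block_decode_def block_flip_def gf4_of_coords_def
       times_gf4_def)

lemma wt_block_decode:
  assumes "(\<Sum>k<4. w k) = 0" and "block_decode s w \<noteq> 0"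
  shows "2 \<le> wt 4 w"
  using assms
  by (cases s; cases "w 0"; cases "w 1"; cases "w 2"; cases "w 3")
     (simp_all add: wt_eq_sum sum_lessThan_4 block_decode_def block_flip_def gf4_of_coords_def
       zero_gf4_def)

definition block :: "(nat \<Rightarrow> 'a) \<Rightarrow> nat \<Rightarrow> nat \<Rightarrow> 'a" where
  "block v j k = v (4 * j + k)"

lemma sum_lessThan_4_mult:
  fixes f :: "nat \<Rightarrow> 'a::comm_monoid_add"
  shows "(\<Sum>i<4 * n. f i) = (\<Sum>j<n. \<Sum>k<4. f (4 * j + k))"
proof -
  have "(\<Sum>i\<in>{4 * j..<4 * j + 4}. f i) = (\<Sum>k<4. f (4 * j + k))" for j
    by (simp add: sum.shift_bounds_nat_ivl[where m = 0, simplified] lessThan_atLeast0 add.commute)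
  then show ?thesis
    using sum.nat_group[of f 4 n] by (simp add: mult.commute)
qed

lemma dotp_4_mult: "dotp (4 * n) u v = (\<Sum>j<n. \<Sum>k<4. block u j k * block v j k)"
  unfolding dotp_def block_def by (rule sum_lessThan_4_mult)

lemma wt_4_mult: "wt (4 * n) v = (\<Sum>j<n. wt 4 (block v j))"
  unfolding wt_eq_sum block_def by (rule sum_lessThan_4_mult)

definition Phi :: "bool \<Rightarrow> nat \<Rightarrow> (nat \<Rightarrow> gf4) \<Rightarrow> nat \<Rightarrow> bit" where
  "Phi s n u i = (if i < 4 * n then phi s (u (i div 4)) ! (i mod 4) else 0)"

definition encode :: "bool \<Rightarrow> nat \<Rightarrow> (nat \<Rightarrow> gf4) \<Rightarrow> nat set \<Rightarrow> nat \<Rightarrow> bit" where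
  "encode s n c J i = Phi s n c i + (\<Sum>j\<in>J. blockB j i)"

definition stab :: "bool \<Rightarrow> nat \<Rightarrow> (nat \<Rightarrow> gf4) set \<Rightarrow> (nat \<Rightarrow> bit) set" where
  "stab s n C = {encode s n c J | c J. c \<in> C \<and> J \<subseteq> {..<n}}"

lemma SX'_eq_stab: "SX' n C = stab True n C"
  unfolding SX'_def stab_def encode_def Phi_def PhiX_def phi_def by simp

lemma SZ'_eq_stab: "SZ' n C = stab False n C"
  unfolding SZ'_def stab_def encode_def Phi_def PhiZ_def phi_def by simp

lemma sum_blockB: "finite J \<Longrightarrow> (\<Sum>j\<in>J. blockB j i) = (if i div 4 \<in> J then 1 else 0)"
  unfolding blockB_def by (simp add: sum.delta)

lemma block_encode:
  assumes "finite J" and "j < n" and "k < 4"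
  shows "block (encode s n c J) j k = phi s (c j) ! k + (if j \<in> J then 1 else 0)"
  using assms by (simp add: block_def encode_def Phi_def sum_blockB)

lemma Phi_zero: "Phi s n (\<lambda>_. 0) = (\<lambda>_. 0)"
proof
  fix i
  have "phi s 0 ! (i mod 4) = 0"
    using less_4_cases[of "i mod 4"] by (auto simp: phi_def zero_gf4_def)
  then show "Phi s n (\<lambda>_. 0) i = 0"
    by (simp add: Phi_def)
qed

lemma blockB_mem_stab:
  assumes "(\<lambda>_. 0) \<in> C" and "j < n"
  shows "blockB j \<in> stab s n C"
proof -
  have "blockB j = encode s n (\<lambda>_. 0) {j}"
    by (rule ext) (simp add: encode_def Phi_zero)
  then show ?thesis
    using assms unfolding stab_def by blast
qed

lemma block_blockB: "k < 4 \<Longrightarrow> block (blockB j) j' k = (if j' = j then 1 else 0)"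
  by (simp add: block_def blockB_def)

lemma dotp_blockB:
  assumes "j < n"
  shows "dotp (4 * n) (blockB j) v = (\<Sum>k<4. block v j k)"
proof -
  have diagonal: "(\<Sum>k<4. block (blockB j) j k * block v j k) = (\<Sum>k<4. block v j k)"
    by (intro sum.cong refl) (simp only: block_blockB lessThan_iff refl if_True mult_1_left)
  have off_diagonal: "(\<Sum>j'\<in>{..<n} - {j}. \<Sum>k<4. block (blockB j) j' k * block v j' k) = 0"
    by (intro sum.neutral ballI) (simp add: block_blockB)
  have "dotp (4 * n) (blockB j) v = (\<Sum>k<4. block (blockB j) j k * block v j k)
      + (\<Sum>j'\<in>{..<n} - {j}. \<Sum>k<4. block (blockB j) j' k * block v j' k)"
    unfolding dotp_4_mult by (rule sum.remove) (simp_all add: assms)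
  then show ?thesis
    by (simp only: diagonal off_diagonal add_0_right)
qed

lemma dual_stab_blocks_even:
  assumes "(\<lambda>_. 0) \<in> C" and "v \<in> dual (4 * n) (stab s n C)" and "j < n"
  shows "(\<Sum>k<4. block v j k) = 0"
proof -
  have "dotp (4 * n) (blockB j) v = 0"
    using blockB_mem_stab[OF assms(1,3)] assms(2) unfolding dual_def by blast
  then show ?thesis
    by (simp only: dotp_blockB[OF assms(3)])
qed

lemma dotp_encode:
  assumes "finite J" and "finite J'"
  shows "dotp (4 * n) (encode True n c J) (encode False n c' J') = gf4_trace (dotp n c c')"
proof -
  have "(\<Sum>k<4. block (encode True n c J) j k * block (encode False n c' J') j k)
      = gf4_trace (c j * c' j)" if "j < n" for j
  proof -
    have "(\<Sum>k<4. block (encode True n c J) j k * block (encode False n c' J') j k)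
      = (\<Sum>k<4. (phi True (c j) ! k + (if j \<in> J then 1 else 0))
                * (phi False (c' j) ! k + (if j \<in> J' then 1 else 0)))"
      using assms that by (intro sum.cong refl) (simp only: block_encode lessThan_iff)
    then show ?thesis
      by (simp only: dotp_phi_plus_ones)
  qed
  then have "dotp (4 * n) (encode True n c J) (encode False n c' J')
      = (\<Sum>j<n. gf4_trace (c j * c' j))"
    unfolding dotp_4_mult by (intro sum.cong) simp_all
  also have "\<dots> = gf4_trace (dotp n c c')"
    by (simp add: dotp_def gf4_trace_sum)
  finally show ?thesis .
qed

lemma stab_orthogonal:
  assumes "\<forall>c\<in>CX. \<forall>c'\<in>CZ. dotp n c c' = 0"
    and "u \<in> stab True n CX" and "v \<in> stab False n CZ"
  shows "dotp (4 * n) u v = 0"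
proof -
  obtain c J c' J' where "c \<in> CX" "c' \<in> CZ" "J \<subseteq> {..<n}" "J' \<subseteq> {..<n}"
    and "u = encode True n c J"
    and "v = encode False n c' J'"
    using assms(2,3) unfolding stab_def by blast
  then have "dotp (4 * n) u v = gf4_trace (dotp n c c')"
    using dotp_encode finite_subset by blast
  then show ?thesis
    using assms(1) \<open>c \<in> CX\<close> \<open>c' \<in> CZ\<close> by (simp add: zero_gf4_def)
qed

definition decode :: "bool \<Rightarrow> nat \<Rightarrow> (nat \<Rightarrow> bit) \<Rightarrow> nat \<Rightarrow> gf4" where
  "decode s n v j = (if j < n then block_decode s (block v j) else 0)"

definition flipped_blocks :: "bool \<Rightarrow> nat \<Rightarrow> (nat \<Rightarrow> bit) \<Rightarrow> nat set" where
  "flipped_blocks s n v = {j. j < n \<and> block_flip s (block v j) = 1}"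

lemma encode_decode:
  assumes "v \<in> vecs (4 * n)" and even: "\<And>j. j < n \<Longrightarrow> (\<Sum>k<4. block v j k) = 0"
  shows "encode s n (decode s n v) (flipped_blocks s n v) = v"
proof
  fix i
  have fin: "finite (flipped_blocks s n v)"
    unfolding flipped_blocks_def by simp
  show "encode s n (decode s n v) (flipped_blocks s n v) i = v i"
  proof (cases "i < 4 * n")
    case True
    define j k where "j = i div 4" and "k = i mod 4"
    have i: "i = 4 * j + k" and "j < n" "k < 4"
      using True unfolding j_def k_def by auto
    have flip: "(if j \<in> flipped_blocks s n v then 1 else 0) = block_flip s (block v j)"
      using \<open>j < n\<close> unfolding flipped_blocks_def by (cases "block_flip s (block v j)") simp_all
    have "encode s n (decode s n v) (flipped_blocks s n v) i
        = block (encode s n (decode s n v) (flipped_blocks s n v)) j k"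
      by (simp add: block_def i)
    also have "\<dots> = phi s (block_decode s (block v j)) ! k + block_flip s (block v j)"
      using block_encode[OF fin \<open>j < n\<close> \<open>k < 4\<close>] \<open>j < n\<close> by (simp only: flip decode_def if_True)
    also have "\<dots> = block v j k"
      by (rule phi_block_decode[OF even[OF \<open>j < n\<close>] \<open>k < 4\<close>])
    also have "\<dots> = v i"
      by (simp add: block_def i)
    finally show ?thesis .
  next
    case False
    then have "i div 4 \<notin> flipped_blocks s n v"
      unfolding flipped_blocks_def by auto
    then show ?thesis
      using False assms(1) by (simp add: encode_def Phi_def sum_blockB[OF fin] vecs_def)
  qed
qed

lemma dotp_encode_decode:
  assumes "\<And>j. j < n \<Longrightarrow> (\<Sum>k<4. block v j k) = 0"
  shows "dotp (4 * n) (encode (\<not> s) n c {}) v = gf4_trace (dotp n c (decode s n v))"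
proof -
  have "(\<Sum>k<4. block (encode (\<not> s) n c {}) j k * block v j k)
      = gf4_trace (c j * decode s n v j)" if "j < n" for j
  proof -
    have "(\<Sum>k<4. block (encode (\<not> s) n c {}) j k * block v j k)
      = (\<Sum>k<4. phi (\<not> s) (c j) ! k * block v j k)"
      using that by (intro sum.cong refl) (simp add: block_encode)
    then show ?thesis
      using phi_dot_block_decode[OF assms[OF that]] that by (simp add: decode_def)
  qed
  then have "dotp (4 * n) (encode (\<not> s) n c {}) v = (\<Sum>j<n. gf4_trace (c j * decode s n v j))"
    unfolding dotp_4_mult by (intro sum.cong) simp_all
  also have "\<dots> = gf4_trace (dotp n c (decode s n v))"
    by (simp add: dotp_def gf4_trace_sum)
  finally show ?thesis .
qed

lemma wt_decode:
  assumes "\<And>j. j < n \<Longrightarrow> (\<Sum>k<4. block v j k) = 0"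
  shows "2 * wt n (decode s n v) \<le> wt (4 * n) v"
proof -
  have "2 * wt n (decode s n v) = (\<Sum>j<n. if block_decode s (block v j) = 0 then 0 else 2)"
    unfolding wt_eq_sum sum_distrib_left by (intro sum.cong) (simp_all add: decode_def)
  also have "\<dots> \<le> (\<Sum>j<n. wt 4 (block v j))"
    using wt_block_decode[OF assms] by (intro sum_mono) simp
  also have "\<dots> = wt (4 * n) v"
    by (rule wt_4_mult[symmetric])
  finally show ?thesis .
qed

lemma decode_mem_dual:
  assumes C: "lin_subspace n C" and v: "v \<in> dual (4 * n) (stab (\<not> s) n C)"
  shows "decode s n v \<in> dual n C"
proof -
  have "(\<lambda>_. 0) \<in> C"
    using C unfolding lin_subspace_def by blast
  then have even: "\<And>j. j < n \<Longrightarrow> (\<Sum>k<4. block v j k) = 0"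
    using v by (rule dual_stab_blocks_even)
  have "gf4_trace (dotp n c (decode s n v)) = 0" if "c \<in> C" for c
  proof -
    have "encode (\<not> s) n c {} \<in> stab (\<not> s) n C"
      using that unfolding stab_def by blast
    then show ?thesis
      using v dotp_encode_decode[OF even] unfolding dual_def by auto
  qed
  then show ?thesis
    using dotp_eq_0_if_gf4_trace_dotp_eq_0[OF C]
    by (auto simp: dual_def vecs_def decode_def)
qed

lemma dual_stab_diff_decode:
  assumes C2: "lin_subspace n C2" and v: "v \<in> dual (4 * n) (stab (\<not> s) n C2) - stab s n C1"
  shows "decode s n v \<in> dual n C2 - C1" and "2 * wt n (decode s n v) \<le> wt (4 * n) v"
proof -
  have "(\<lambda>_. 0) \<in> C2"
    using C2 unfolding lin_subspace_def by blast
  then have even: "\<And>j. j < n \<Longrightarrow> (\<Sum>k<4. block v j k) = 0"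
    using v by (blast intro: dual_stab_blocks_even)
  have "decode s n v \<notin> C1"
  proof
    assume "decode s n v \<in> C1"
    moreover have "flipped_blocks s n v \<subseteq> {..<n}"
      unfolding flipped_blocks_def by auto
    moreover have "v \<in> vecs (4 * n)"
      using v unfolding dual_def by blast
    then have "v = encode s n (decode s n v) (flipped_blocks s n v)"
      using even by (rule encode_decode[symmetric])
    ultimately have "v \<in> stab s n C1"
      unfolding stab_def by blast
    with v show False
      by blast
  qed
  then show "decode s n v \<in> dual n C2 - C1"
    using decode_mem_dual[OF C2] v by blast
  show "2 * wt n (decode s n v) \<le> wt (4 * n) v"
    using even by (rule wt_decode)
qed

lemma enat_mult_Inf_le_Inf:
  fixes f :: "'a \<Rightarrow> nat" and g :: "'b \<Rightarrow> nat"
  assumes "\<And>y. y \<in> B \<Longrightarrow> \<exists>x\<in>A. k * f x \<le> g y"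
  shows "enat k * (INF x\<in>A. enat (f x)) \<le> (INF y\<in>B. enat (g y))"
proof (rule INF_greatest)
  fix y
  assume "y \<in> B"
  then obtain x where "x \<in> A" and "k * f x \<le> g y"
    using assms by blast
  then have "enat k * (INF x\<in>A. enat (f x)) \<le> enat k * enat (f x)"
    by (intro mult_left_mono INF_lower) simp_all
  also have "\<dots> \<le> enat (g y)"
    using \<open>k * f x \<le> g y\<close> by simp
  finally show "enat k * (INF x\<in>A. enat (f x)) \<le> enat (g y)" .
qed

lemma two_mult_Inf_wt_le:
  assumes "lin_subspace n C2"
  shows "2 * (INF u\<in>dual n C2 - C1. enat (wt n u))
    \<le> (INF v\<in>dual (4 * n) (stab (\<not> s) n C2) - stab s n C1. enat (wt (4 * n) v))"
  using enat_mult_Inf_le_Inf[of _ _ 2] dual_stab_diff_decode[OF assms]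
  by (metis numeral_eq_enat)

theorem mainTheorem15:
  fixes n :: nat and CX CZ :: "(nat \<Rightarrow> gf4) set"
  assumes "css_code n CX CZ"
  shows "(\<forall>u\<in>SX' n CX. \<forall>v\<in>SZ' n CZ. dotp (4 * n) u v = 0)
       \<and> 2 * css_dist n CX CZ \<le> css_dist (4 * n) (SX' n CX) (SZ' n CZ)"
proof
  show "\<forall>u\<in>SX' n CX. \<forall>v\<in>SZ' n CZ. dotp (4 * n) u v = 0"
    using assms stab_orthogonal unfolding css_code_def SX'_eq_stab SZ'_eq_stab by blast
  have "lin_subspace n CX" and "lin_subspace n CZ"
    using assms unfolding css_code_def by simp_all
  then have "2 * dist_X n CX CZ \<le> dist_X (4 * n) (SX' n CX) (SZ' n CZ)"
    and "2 * dist_Z n CX CZ \<le> dist_Z (4 * n) (SX' n CX) (SZ' n CZ)"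
    using two_mult_Inf_wt_le[of n CZ CX True] two_mult_Inf_wt_le[of n CX CZ False]
    unfolding dist_X_def dist_Z_def SX'_eq_stab SZ'_eq_stab by simp_all
  moreover have "2 * css_dist n CX CZ \<le> min (2 * dist_X n CX CZ) (2 * dist_Z n CX CZ)"
    unfolding css_dist_def by (simp add: mult_left_mono)
  ultimately show "2 * css_dist n CX CZ \<le> css_dist (4 * n) (SX' n CX) (SZ' n CZ)"
    unfolding css_dist_def by (meson min.mono order_trans)
qed

end
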